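(* For all even integers $n\ge2$ and real numbers $a\ge1$, $x,y\in(0,\pi)$, we have $\Theta_{n,a}(x,y)\ge 2\sin(x)\sin(y)\bigl(1+\cos(x)\cos(y)\bigr)$. Equality holds if and only if $n=2$, $a=1$.
   Context: For a real number $a$ and integers $0\le m$, $\binom{m+a}{m}=\frac{(a+1)(a+2)\cdots(a+m)}{m!}$ (equal to $1$ when $m=0$). For an integer $n\ge1$, $\Theta_{n,a}(x,y)=\sum_{j=1}^n\binom{n+a-j}{n-j}\frac{\sin(jx)\sin(jy)}{j}$. *)

theory Defs
  imports "HOL-Analysis.Analysis"
begin

text \<open>binom m a = binomial coefficient (m+a choose m) = (a+1)(a+2)...(a+m)/m!, real a.\<close>
definition binom_ma :: "nat \<Rightarrow> real \<Rightarrow> real" where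
  "binom_ma m a = (\<Prod>i=1..m. (a + real i)) / fact m"

definition Theta :: "nat \<Rightarrow> real \<Rightarrow> real \<Rightarrow> real \<Rightarrow> real" where
  "Theta n a x y = (\<Sum>j=1..n. binom_ma (n - j) a * sin (real j * x) * sin (real j * y) / real j)"

end

theory Submission
  imports Defs
begin

(*
  The hockey-stick identity applied twice gives
  binom (k, a) = sum_l (k + 1 - l) * binom (l, a - 2), hence
  Theta (n, a) = sum_l binom (l, a - 2) * Theta (n - l, 1).
  For a >= 1 these coefficients are nonnegative, and those with l >= 1 vanish exactly
  when a = 1. The kernels Theta (m, 1) carry the Fejer weights m + 1 - j, and the
  right-hand side of the inequality is Theta (2, 1). So it suffices that Theta (m, 1) > 0
  for m >= 1 and Theta (n, 1) > Theta (2, 1) for even n >= 4.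

  Both follow from positivity of a sine polynomial sum_j w_j sin (j t) on (0, pi):
  the bilinear sum sum_j w_j sin (j x) sin (j y) / j equals (G (x + y) - G (x - y)) / 2
  for an antiderivative G of that polynomial, and G is even, symmetric about pi and
  strictly increasing on [0, pi]. The sine polynomials are evaluated in closed form
  after multiplication by 2 (1 - cos t).
*)

lemma abs_sin_real_mult_le: "\<bar>sin (real k * t)\<bar> \<le> real k * \<bar>sin t\<bar>"
proof (induction k)
  case 0
  then show ?case by simp
next
  case (Suc k)
  have "sin (real (Suc k) * t) = sin (real k * t) * cos t + cos (real k * t) * sin t"
    by (simp add: distrib_right sin_add)
  then have "\<bar>sin (real (Suc k) * t)\<bar> = \<bar>sin (real k * t) * cos t + cos (real k * t) * sin t\<bar>"
    by simp
  also have "\<dots> \<le> \<bar>sin (real k * t)\<bar> * \<bar>cos t\<bar> + \<bar>cos (real k * t)\<bar> * \<bar>sin t\<bar>"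
    by (metis abs_mult abs_triangle_ineq)
  also have "\<dots> \<le> \<bar>sin (real k * t)\<bar> * 1 + 1 * \<bar>sin t\<bar>"
    by (intro add_mono mult_mono) auto
  finally show ?case
    using Suc.IH by (simp add: distrib_right)
qed

lemma abs_sin_real_mult_less:
  assumes "0 < t" "t < pi" "2 \<le> k"
  shows "\<bar>sin (real k * t)\<bar> < real k * sin t"
proof -
  obtain m where k: "k = m + 2"
    using le_Suc_ex[OF assms(3)] by (auto simp: add.commute)
  have sin_pos: "0 < sin t"
    using assms sin_gt_zero by auto
  then have "cos t ^ 2 < 1"
    using sin_cos_squared_add[of t] by (smt (verit) zero_less_power)
  then have "\<bar>cos t\<bar> < 1"
    by (simp add: abs_square_less_1)
  then have "\<bar>sin (2 * t)\<bar> < 2 * sin t"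
    using sin_pos by (simp add: sin_double abs_mult)
  have "sin (real k * t) = sin (real m * t) * cos (2 * t) + cos (real m * t) * sin (2 * t)"
    unfolding k by (simp only: of_nat_add of_nat_numeral distrib_right sin_add)
  then have "\<bar>sin (real k * t)\<bar> = \<bar>sin (real m * t) * cos (2 * t) + cos (real m * t) * sin (2 * t)\<bar>"
    by simp
  also have "\<dots> \<le> \<bar>sin (real m * t)\<bar> * \<bar>cos (2 * t)\<bar> + \<bar>cos (real m * t)\<bar> * \<bar>sin (2 * t)\<bar>"
    by (metis abs_mult abs_triangle_ineq)
  also have "\<dots> \<le> \<bar>sin (real m * t)\<bar> * 1 + 1 * \<bar>sin (2 * t)\<bar>"
    by (intro add_mono mult_mono) auto
  also have "\<dots> < real m * sin t + 2 * sin t"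
    using abs_sin_real_mult_le[of m t] sin_pos \<open>\<bar>sin (2 * t)\<bar> < 2 * sin t\<close> by simp
  finally show ?thesis
    by (simp add: k algebra_simps)
qed

lemma Dirichlet_sin_sum:
  "2 * (1 - cos t) * (\<Sum>j=1..k. sin (real j * t)) = sin t + sin (real k * t) - sin (real (Suc k) * t)"
proof (induction k)
  case 0
  then show ?case by simp
next
  case (Suc k)
  have "sin (real (Suc (Suc k)) * t) + sin (real k * t) = 2 * sin (real (Suc k) * t) * cos t"
    using sin_add[of "real (Suc k) * t" t] sin_diff[of "real (Suc k) * t" t]
    by (simp add: algebra_simps)
  then show ?case
    using Suc.IH by (simp add: algebra_simps)
qed

lemma Fejer_sin_sum:
  assumes "m \<le> N"
  shows "2 * (1 - cos t) * (\<Sum>j=1..N. real (m + 1 - j) * sin (real j * t))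
     = real (m + 1) * sin t - sin (real (Suc m) * t)"
proof -
  have "2 * (1 - cos t) * (\<Sum>j=1..m. real (m + 1 - j) * sin (real j * t))
     = real (m + 1) * sin t - sin (real (Suc m) * t)" for m
  proof (induction m)
    case 0
    then show ?case by simp
  next
    case (Suc m)
    have "(\<Sum>j=1..Suc m. real (Suc m + 1 - j) * sin (real j * t))
        = (\<Sum>j=1..m. real (m + 1 - j) * sin (real j * t)) + (\<Sum>j=1..Suc m. sin (real j * t))"
    proof -
      have "(\<Sum>j=1..Suc m. real (Suc m + 1 - j) * sin (real j * t))
          = (\<Sum>j=1..Suc m. real (m + 1 - j) * sin (real j * t) + sin (real j * t))"
        by (intro sum.cong) (auto simp: Suc_diff_le algebra_simps)
      then show ?thesis
        by (simp add: sum.distrib)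
    qed
    then show ?case
      using Suc.IH Dirichlet_sin_sum[of t "Suc m"] by (simp add: algebra_simps)
  qed
  moreover have "(\<Sum>j=1..N. real (m + 1 - j) * sin (real j * t)) = (\<Sum>j=1..m. real (m + 1 - j) * sin (real j * t))"
    using assms by (intro sum.mono_neutral_right) auto
  ultimately show ?thesis
    by simp
qed

lemma one_minus_cos_pos: "0 < t \<Longrightarrow> t < pi \<Longrightarrow> 0 < 1 - cos t"
  using cos_monotone_0_pi[of 0 t] by auto

lemma Fejer_sin_sum_pos:
  assumes "1 \<le> m" "m \<le> N" "0 < t" "t < pi"
  shows "0 < (\<Sum>j=1..N. real (m + 1 - j) * sin (real j * t))"
proof -
  have "0 < 2 * (1 - cos t) * (\<Sum>j=1..N. real (m + 1 - j) * sin (real j * t))"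
    using Fejer_sin_sum[OF assms(2)] abs_sin_real_mult_less[of t "m + 1"] assms by auto
  then show ?thesis
    using one_minus_cos_pos[of t] assms by (simp add: zero_less_mult_iff)
qed

lemma DERIV_pos_except_imp_increasing:
  fixes f f' :: "real \<Rightarrow> real"
  assumes deriv: "\<And>t. (f has_real_derivative f' t) (at t)"
    and pos: "\<And>t. a < t \<Longrightarrow> t < b \<Longrightarrow> t \<noteq> c \<Longrightarrow> 0 < f' t"
    and "a \<le> p" "p < q" "q \<le> b"
  shows "f p < f q"
proof -
  have increasing: "f u < f v" if "a \<le> u" "u < v" "v \<le> b" "c \<notin> {u<..<v}" for u v
  proof (rule DERIV_pos_imp_increasing_open[OF \<open>u < v\<close>])
    show "\<exists>y. (f has_real_derivative y) (at t) \<and> 0 < y" if "u < t" "t < v" for t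
      using deriv pos[of t] that \<open>a \<le> u\<close> \<open>v \<le> b\<close> \<open>c \<notin> {u<..<v}\<close> by fastforce
    show "continuous_on {u..v} f"
      using deriv by (meson DERIV_isCont continuous_at_imp_continuous_on)
  qed
  show ?thesis
  proof (cases "c \<in> {p<..<q}")
    case True
    then have "f p < f c" "f c < f q"
      using assms by (auto intro!: increasing)
    then show ?thesis by simp
  next
    case False
    then show ?thesis
      using assms by (auto intro!: increasing)
  qed
qed

lemma cos_real_mult_two_pi_minus: "cos (real j * (2 * pi - t)) = cos (real j * t)"
proof -
  have "real j * (2 * pi - t) = 2 * pi * real_of_int (int j) - real j * t"
    by (simp add: algebra_simps)
  then show ?thesis
    by (simp only: cos_diff cos_int_2pin sin_int_2pin)
qed

lemma sin_sin_sum_pos_if_sin_sum_pos: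
  fixes w :: "nat \<Rightarrow> real"
  assumes pos: "\<And>t. 0 < t \<Longrightarrow> t < pi \<Longrightarrow> t \<noteq> c \<Longrightarrow> 0 < (\<Sum>j=1..N. w j * sin (real j * t))"
    and x: "0 < x" "x < pi" and y: "0 < y" "y < pi"
  shows "0 < (\<Sum>j=1..N. w j * sin (real j * x) * sin (real j * y) / real j)"
proof -
  define G where "G t = (\<Sum>j=1..N. - w j * cos (real j * t) / real j)" for t
  have deriv: "(G has_real_derivative (\<Sum>j=1..N. w j * sin (real j * t))) (at t)" for t
  proof -
    have "(G has_real_derivative (\<Sum>j=1..N. - w j * (- sin (real j * t) * real j) / real j)) (at t)"
      unfolding G_def by (intro derivative_eq_intros) auto
    also have "(\<Sum>j=1..N. - w j * (- sin (real j * t) * real j) / real j) = (\<Sum>j=1..N. w j * sin (real j * t))"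
      by (intro sum.cong) auto
    finally show ?thesis .
  qed
  have increasing: "G p < G q" if "0 \<le> p" "p < q" "q \<le> pi" for p q
    using DERIV_pos_except_imp_increasing[OF deriv pos] that by blast
  have "w j * sin (real j * x) * sin (real j * y) / real j
      = ((- w j * cos (real j * (x + y)) / real j) - (- w j * cos (real j * (x - y)) / real j)) / 2" for j
    by (cases "j = 0") (simp_all add: sin_times_sin distrib_left right_diff_distrib field_simps)
  then have product_to_sum: "(\<Sum>j=1..N. w j * sin (real j * x) * sin (real j * y) / real j) = (G (x + y) - G (x - y)) / 2"
    unfolding G_def by (simp only: sum_divide_distrib[symmetric] sum_subtractf)
  have "G (- t) = G t" for t
    unfolding G_def by simp
  then have "G (x - y) = G \<bar>x - y\<bar>"
    by (metis abs_minus_commute abs_of_nonneg abs_of_nonpos diff_ge_0_iff_ge minus_diff_eq nle_le)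
  also have "\<dots> < G (x + y)"
  proof (cases "x + y \<le> pi")
    case True
    then show ?thesis
      using x y by (intro increasing) auto
  next
    case False
    then have "G \<bar>x - y\<bar> < G (2 * pi - (x + y))"
      using x y by (intro increasing) auto
    then show ?thesis
      unfolding G_def by (simp only: cos_real_mult_two_pi_minus)
  qed
  finally show ?thesis
    using product_to_sum by simp
qed

lemma cos_four_mult_less_one:
  assumes "0 < t" "t < pi" "t \<noteq> pi / 2"
  shows "cos (4 * t) < 1"
proof -
  have "cos t \<noteq> 0"
    using cos_inj_pi[of t "pi / 2"] assms by auto
  moreover have "sin t \<noteq> 0"
    using sin_gt_zero[OF assms(1,2)] by simp
  ultimately have "sin (2 * t) \<noteq> 0"
    by (simp add: sin_double)
  then show ?thesis
    using cos_double_sin[of "2 * t"] by simp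
qed

lemma sin_odd_mult_minus_sin_three_less:
  assumes "even n" "4 \<le> n" "0 < t" "t < pi" "t \<noteq> pi / 2"
  shows "sin (real (n + 1) * t) - sin (3 * t) < (real n - 2) * sin t"
proof -
  have sin_pos: "0 < sin t"
    using sin_gt_zero assms by auto
  \<comment> \<open>telescoping over sin ((2i+1) t) - sin ((2i-1) t) = 2 sin t cos (2 i t); only the
    first term, 2 sin t cos (4 t), is strictly below 2 sin t\<close>
  have bound: "sin (real (2 * k + 1) * t) - sin (3 * t) \<le> 2 * (real k - 2) * sin t + 2 * cos (4 * t) * sin t"
    if "2 \<le> k" for k
    using that
  proof (induction k rule: dec_induct)
    case base
    have "sin (5 * t) - sin (3 * t) = 2 * sin t * cos (4 * t)"
      using sin_diff_sin[of "5 * t" "3 * t"] by simp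
    then show ?case by simp
  next
    case (step k)
    have "(real (2 * Suc k + 1) * t - real (2 * k + 1) * t) / 2 = t"
      "(real (2 * Suc k + 1) * t + real (2 * k + 1) * t) / 2 = real (2 * k + 2) * t"
      by (simp_all add: algebra_simps)
    then have "sin (real (2 * Suc k + 1) * t) - sin (real (2 * k + 1) * t) = 2 * sin t * cos (real (2 * k + 2) * t)"
      using sin_diff_sin[of "real (2 * Suc k + 1) * t" "real (2 * k + 1) * t"] by simp
    also have "\<dots> \<le> 2 * sin t"
      using sin_pos by simp
    finally show ?case
      using step.IH by (simp add: algebra_simps)
  qed
  obtain k where k: "n = 2 * k" "2 \<le> k"
    using assms(1,2) by (auto elim!: evenE)
  have "2 * cos (4 * t) * sin t < 2 * sin t"
    using cos_four_mult_less_one[OF assms(3-5)] sin_pos by simp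
  moreover have "(real n - 2) * sin t = 2 * (real k - 2) * sin t + 2 * sin t"
    by (simp add: k algebra_simps)
  ultimately show ?thesis
    using bound[of k] k by simp
qed

lemma prod_shifted_eq_pochhammer: "(\<Prod>i=1..m. (a + real i)) = pochhammer (a + 1) m"
  by (induction m) (simp_all add: prod.nat_ivl_Suc' pochhammer_Suc algebra_simps)

lemma binom_ma_eq_gbinomial: "binom_ma m a = (a + real m) gchoose m"
  unfolding binom_ma_def prod_shifted_eq_pochhammer gbinomial_pochhammer' by simp

lemma binom_ma_one: "binom_ma m 1 = real m + 1"
proof -
  have "binom_ma m 1 = of_nat (Suc m) gchoose m"
    by (simp add: binom_ma_eq_gbinomial add.commute)
  also have "\<dots> = real (Suc m choose m)"
    by (simp only: binomial_gbinomial)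
  also have "Suc m choose m = Suc m"
    using binomial_symmetric[of m "Suc m"] by simp
  finally show ?thesis by simp
qed

lemma binom_ma_nonneg: "-1 \<le> a \<Longrightarrow> 0 \<le> binom_ma m a"
  unfolding binom_ma_def by (intro divide_nonneg_pos prod_nonneg) auto

lemma binom_ma_minus_one: "1 \<le> m \<Longrightarrow> binom_ma m (-1) = 0"
  unfolding binom_ma_def by (subst prod_zero) (auto intro!: bexI[of _ 1])

lemma binom_ma_sum_lower: "binom_ma m a = (\<Sum>l\<le>m. binom_ma l (a - 1))"
  using gbinomial_parallel_sum[of "a - 1" m] by (simp add: binom_ma_eq_gbinomial algebra_simps)

lemma binom_ma_sum_lower_twice: "binom_ma m a = (\<Sum>l\<le>m. real (m + 1 - l) * binom_ma l (a - 2))"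
proof (induction m)
  case 0
  then show ?case by (simp add: binom_ma_def)
next
  case (Suc m)
  have "(\<Sum>l\<le>Suc m. real (Suc m + 1 - l) * binom_ma l (a - 2))
      = (\<Sum>l\<le>Suc m. real (m + 1 - l) * binom_ma l (a - 2)) + (\<Sum>l\<le>Suc m. binom_ma l (a - 2))"
    by (subst sum.distrib[symmetric], intro sum.cong) (auto simp: Suc_diff_le algebra_simps)
  also have "\<dots> = binom_ma m a + binom_ma (Suc m) (a - 1)"
    using Suc.IH binom_ma_sum_lower[of "Suc m" "a - 1"] by simp
  also have "\<dots> = binom_ma (Suc m) a"
    using gbinomial_Suc_Suc[of "a - 1 + real (Suc m)" m]
    by (simp add: binom_ma_eq_gbinomial algebra_simps)
  finally show ?case ..
qed

lemma Theta_one_eq_sum: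
  assumes "m \<le> N"
  shows "Theta m 1 x y = (\<Sum>j=1..N. real (m + 1 - j) * sin (real j * x) * sin (real j * y) / real j)"
proof -
  have "Theta m 1 x y = (\<Sum>j=1..m. real (m + 1 - j) * sin (real j * x) * sin (real j * y) / real j)"
    unfolding Theta_def binom_ma_one by (intro sum.cong) (auto simp: of_nat_diff)
  also have "\<dots> = (\<Sum>j=1..N. real (m + 1 - j) * sin (real j * x) * sin (real j * y) / real j)"
    using assms by (intro sum.mono_neutral_left) auto
  finally show ?thesis .
qed

lemma Theta_eq_sum_Theta_one:
  "Theta n a x y = (\<Sum>l\<le>n. binom_ma l (a - 2) * Theta (n - l) 1 x y)"
proof -
  define s where "s j = sin (real j * x) * sin (real j * y) / real j" for j
  have binom: "binom_ma (n - j) a = (\<Sum>l\<le>n. real (n - j + 1 - l) * binom_ma l (a - 2))" for j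
    unfolding binom_ma_sum_lower_twice[of "n - j"] by (intro sum.mono_neutral_left) auto
  have "Theta n a x y = (\<Sum>j=1..n. \<Sum>l\<le>n. binom_ma l (a - 2) * (real (n - l + 1 - j) * s j))"
    unfolding Theta_def binom sum_distrib_right s_def
    by (intro sum.cong refl) (auto simp: algebra_simps sum_divide_distrib)
  also have "\<dots> = (\<Sum>l\<le>n. binom_ma l (a - 2) * Theta (n - l) 1 x y)"
    by (subst sum.swap) (simp add: Theta_one_eq_sum[of "n - _" n] s_def sum_distrib_left mult.assoc)
  finally show ?thesis .
qed

lemma Theta_one_pos:
  assumes "1 \<le> m" "0 < x" "x < pi" "0 < y" "y < pi"
  shows "0 < Theta m 1 x y"
  unfolding Theta_one_eq_sum[OF order_refl]
  using assms by (intro sin_sin_sum_pos_if_sin_sum_pos[where c = 0] Fejer_sin_sum_pos) auto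

lemma Theta_one_nonneg:
  assumes "0 < x" "x < pi" "0 < y" "y < pi"
  shows "0 \<le> Theta m 1 x y"
  using Theta_one_pos[of m x y] assms by (cases "m = 0") (auto simp: Theta_def)

lemma Theta_two_one: "Theta 2 1 x y = 2 * sin x * sin y * (1 + cos x * cos y)"
proof -
  have "Theta 2 1 x y = 2 * sin x * sin y + sin (2 * x) * sin (2 * y) / 2"
    unfolding Theta_def binom_ma_one by (simp add: numeral_2_eq_2 sum.atLeast_Suc_atMost)
  then show ?thesis
    unfolding sin_double by (simp add: algebra_simps)
qed

lemma Theta_two_one_less:
  assumes "even n" "4 \<le> n" and x: "0 < x" "x < pi" and y: "0 < y" "y < pi"
  shows "Theta 2 1 x y < Theta n 1 x y"
proof -
  define w where "w j = real (n + 1 - j) - real (2 + 1 - j)" for j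
  have "2 \<le> n"
    using assms(2) by simp
  have "Theta n 1 x y - Theta 2 1 x y = (\<Sum>j=1..n. w j * sin (real j * x) * sin (real j * y) / real j)"
    unfolding Theta_one_eq_sum[of n n, OF order_refl] Theta_one_eq_sum[OF \<open>2 \<le> n\<close>] w_def
      sum_subtractf[symmetric]
    by (simp only: left_diff_distrib diff_divide_distrib)
  also have "0 < \<dots>"
  proof (rule sin_sin_sum_pos_if_sin_sum_pos[where c = "pi / 2", OF _ x y])
    fix t :: real
    assume t: "0 < t" "t < pi" "t \<noteq> pi / 2"
    have "2 * (1 - cos t) * (\<Sum>j=1..n. w j * sin (real j * t))
        = (real (n + 1) * sin t - sin (real (n + 1) * t)) - (3 * sin t - sin (3 * t))"
      using Fejer_sin_sum[of n n t] Fejer_sin_sum[of 2 n t] assms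
      by (simp add: w_def left_diff_distrib sum_subtractf right_diff_distrib)
    also have "0 < \<dots>"
      using sin_odd_mult_minus_sin_three_less[OF assms(1,2) t] by (simp add: algebra_simps)
    finally show "0 < (\<Sum>j=1..n. w j * sin (real j * t))"
      using one_minus_cos_pos[of t] t by (simp add: zero_less_mult_iff)
  qed
  finally show ?thesis by simp
qed

theorem theorem3p8:
  fixes n :: nat and a x y :: real
  assumes "even n" and "n \<ge> 2" and "a \<ge> 1"
    and "0 < x" and "x < pi" and "0 < y" and "y < pi"
  shows "Theta n a x y \<ge> 2 * sin x * sin y * (1 + cos x * cos y)
         \<and> (Theta n a x y = 2 * sin x * sin y * (1 + cos x * cos y) \<longleftrightarrow> n = 2 \<and> a = 1)"
proof -
  define R where "R = (\<Sum>l=1..n. binom_ma l (a - 2) * Theta (n - l) 1 x y)"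
  have "Theta n a x y = Theta n 1 x y + R"
    unfolding Theta_eq_sum_Theta_one[of n a] R_def atMost_atLeast0
    by (simp add: sum.atLeast_Suc_atMost binom_ma_def)
  moreover have "0 \<le> R"
    unfolding R_def using assms by (intro sum_nonneg mult_nonneg_nonneg binom_ma_nonneg Theta_one_nonneg) auto
  moreover have "R = 0 \<longleftrightarrow> a = 1"
  proof
    show "R = 0" if "a = 1"
      unfolding R_def that by (simp add: binom_ma_minus_one)
    have "binom_ma 1 (a - 2) * Theta (n - 1) 1 x y \<le> R"
      unfolding R_def using assms
      by (intro member_le_sum mult_nonneg_nonneg binom_ma_nonneg Theta_one_nonneg) auto
    then have "(a - 1) * Theta (n - 1) 1 x y \<le> R"
      by (simp add: binom_ma_def)
    moreover have "0 < Theta (n - 1) 1 x y"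
      using assms by (intro Theta_one_pos) auto
    ultimately show "a = 1" if "R = 0"
      using that assms(3) by (smt (verit) mult_pos_pos)
  qed
  moreover have "2 * sin x * sin y * (1 + cos x * cos y) \<le> Theta n 1 x y
      \<and> (Theta n 1 x y = 2 * sin x * sin y * (1 + cos x * cos y) \<longleftrightarrow> n = 2)"
  proof (cases "n = 2")
    case False
    then have "4 \<le> n"
      using assms(1,2) by presburger
    then show ?thesis
      using Theta_two_one_less[of n x y] Theta_two_one[of x y] assms False by auto
  qed (simp add: Theta_two_one)
  ultimately show ?thesis
    by auto
qed

end
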